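(* Let $\mathcal{A}$ be a commutative $\sigma$-finite W*-algebra or a commutative AW*-algebra, and let $\mathcal{E}$ be a Hilbert C*-module over $\mathcal{A}$ of rank $d$. Let $\{\tau_j\}_{j=1}^n$ be a collection in $\mathcal{E}$ with $\langle\tau_j,\tau_j\rangle=1$ for all $1\leq j\leq n$. Then \[ n^2\geq \|\mathrm{MFP}(\{\tau_j\}_{j=1}^n)\|\geq \mathrm{MFP}(\{\tau_j\}_{j=1}^n)\geq \frac{n^2}{d}. \]
   Context: A W*-algebra is $\sigma$-finite if it contains at most countably many mutually orthogonal (nonzero) projections. A C*-algebra is an AW*-algebra if every set of orthogonal projections has a supremum and every maximal commutative self-adjoint subalgebra is generated by its projections. Such algebras are unital, with identity $1$. The $\mathcal{A}$-valued inner product on $\mathcal{E}$ is linear in the first variable and conjugate-linear in the second. $\mathcal{E}$ has rank $d$ if it has an orthonormal basis $\{\omega_j\}_{j=1}^d$, i.e. $\langle\omega_j,\omega_k\rangle=\delta_{jk}1$ and $x=\sum_{j=1}^d\langle x,\omega_j\rangle\omega_j$ for all $x$. The modular frame potential is $\mathrm{MFP}(\{\tau_j\}_{j=1}^n)=\sum_{j=1}^n\sum_{k=1}^n\langle \tau_j, \tau_k\rangle \langle \tau_k, \tau_j\rangle\in\mathcal{A}$. Inequalities between elements of $\mathcal{A}$ are in the order on self-adjoint elements, a real number $c$ being identified with $c\cdot1$; $\|\cdot\|$ is the C*-norm. *)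

theory Defs
  imports "HOL-Analysis.Analysis"
begin

(* A commutative unital C*-algebra is modelled by a type 'a of class
   {real_normed_algebra_1, banach, comm_ring_1} (Banach, unital, commutative)
   together with an involution st and a complex scalar multiplication sc,
   compatible with the real scalar multiplication of the type class.
   A Hilbert C*-module over it is a type 'm (abelian group) with an action
   act :: 'a => 'm => 'm and an 'a-valued inner product ip, linear in the
   first variable.  Complex scalars act on 'm via act (sc c 1). *)

definition cstar_algebra :: "('a::{real_normed_algebra_1,banach,comm_ring_1} \<Rightarrow> 'a) \<Rightarrow> (complex \<Rightarrow> 'a \<Rightarrow> 'a) \<Rightarrow> bool" where
  "cstar_algebra st sc \<longleftrightarrow>
     (\<forall>c d a. sc (c + d) a = sc c a + sc d a) \<and>
     (\<forall>c a b. sc c (a + b) = sc c a + sc c b) \<and>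
     (\<forall>c d a. sc (c * d) a = sc c (sc d a)) \<and>
     (\<forall>a. sc 1 a = a) \<and>
     (\<forall>r a. sc (complex_of_real r) a = r *\<^sub>R a) \<and>
     (\<forall>c a b. sc c (a * b) = sc c a * b) \<and>
     (\<forall>c a b. sc c (a * b) = a * sc c b) \<and>
     (\<forall>c a. norm (sc c a) = cmod c * norm a) \<and>
     (\<forall>a. st (st a) = a) \<and>
     (\<forall>a b. st (a + b) = st a + st b) \<and>
     (\<forall>c a. st (sc c a) = sc (cnj c) (st a)) \<and>
     (\<forall>a b. st (a * b) = st b * st a) \<and>
     (\<forall>a. norm (st a * a) = (norm a)\<^sup>2)"

definition spec :: "(complex \<Rightarrow> 'a \<Rightarrow> 'a::ring_1) \<Rightarrow> 'a \<Rightarrow> complex set" where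
  "spec sc a = {z. \<not> (\<exists>b. b * (sc z 1 - a) = 1 \<and> (sc z 1 - a) * b = 1)}"

definition pos :: "('a \<Rightarrow> 'a) \<Rightarrow> (complex \<Rightarrow> 'a \<Rightarrow> 'a::ring_1) \<Rightarrow> 'a \<Rightarrow> bool" where
  "pos st sc a \<longleftrightarrow> st a = a \<and> spec sc a \<subseteq> complex_of_real ` {0..}"

definition alg_le :: "('a \<Rightarrow> 'a) \<Rightarrow> (complex \<Rightarrow> 'a \<Rightarrow> 'a::ring_1) \<Rightarrow> 'a \<Rightarrow> 'a \<Rightarrow> bool" where
  "alg_le st sc a b \<longleftrightarrow> st a = a \<and> st b = b \<and> pos st sc (b - a)"

definition proj :: "('a \<Rightarrow> 'a) \<Rightarrow> 'a::ring_1 \<Rightarrow> bool" where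
  "proj st p \<longleftrightarrow> st p = p \<and> p * p = p"

definition star_subalg :: "('a \<Rightarrow> 'a) \<Rightarrow> (complex \<Rightarrow> 'a \<Rightarrow> 'a::ring_1) \<Rightarrow> 'a set \<Rightarrow> bool" where
  "star_subalg st sc B \<longleftrightarrow> 0 \<in> B \<and> (\<forall>a\<in>B. \<forall>b\<in>B. a + b \<in> B \<and> a * b \<in> B) \<and>
     (\<forall>c. \<forall>a\<in>B. sc c a \<in> B) \<and> (\<forall>a\<in>B. st a \<in> B)"

definition comm_star_subalg :: "('a \<Rightarrow> 'a) \<Rightarrow> (complex \<Rightarrow> 'a \<Rightarrow> 'a::ring_1) \<Rightarrow> 'a set \<Rightarrow> bool" where
  "comm_star_subalg st sc B \<longleftrightarrow> star_subalg st sc B \<and> (\<forall>a\<in>B. \<forall>b\<in>B. a * b = b * a)"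

definition masa :: "('a \<Rightarrow> 'a) \<Rightarrow> (complex \<Rightarrow> 'a \<Rightarrow> 'a::ring_1) \<Rightarrow> 'a set \<Rightarrow> bool" where
  "masa st sc B \<longleftrightarrow> comm_star_subalg st sc B \<and>
     (\<forall>C. comm_star_subalg st sc C \<and> B \<subseteq> C \<longrightarrow> C = B)"

definition gen_cstar :: "('a \<Rightarrow> 'a) \<Rightarrow> (complex \<Rightarrow> 'a \<Rightarrow> 'a::{ring_1,topological_space}) \<Rightarrow> 'a set \<Rightarrow> 'a set" where
  "gen_cstar st sc P = \<Inter>{C. star_subalg st sc C \<and> closed C \<and> P \<subseteq> C}"

definition aw_star :: "('a \<Rightarrow> 'a) \<Rightarrow> (complex \<Rightarrow> 'a \<Rightarrow> 'a::{ring_1,topological_space}) \<Rightarrow> bool" where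
  "aw_star st sc \<longleftrightarrow>
     (\<forall>S. (\<forall>p\<in>S. proj st p) \<and> (\<forall>p\<in>S. \<forall>q\<in>S. p \<noteq> q \<longrightarrow> p * q = 0) \<longrightarrow>
          (\<exists>s. proj st s \<and> (\<forall>p\<in>S. p * s = p) \<and>
               (\<forall>t. proj st t \<and> (\<forall>p\<in>S. p * t = p) \<longrightarrow> s * t = s))) \<and>
     (\<forall>B. masa st sc B \<longrightarrow> B = gen_cstar st sc {p\<in>B. proj st p})"

definition cfunctional :: "(complex \<Rightarrow> 'a \<Rightarrow> 'a::real_normed_vector) \<Rightarrow> ('a \<Rightarrow> complex) \<Rightarrow> bool" where
  "cfunctional sc \<phi> \<longleftrightarrow> (\<forall>x y. \<phi> (x + y) = \<phi> x + \<phi> y) \<and> (\<forall>c x. \<phi> (sc c x) = c * \<phi> x) \<and>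
     (\<exists>K. \<forall>x. cmod (\<phi> x) \<le> K * norm x)"

definition fnorm :: "('a::real_normed_vector \<Rightarrow> complex) \<Rightarrow> real" where
  "fnorm \<phi> = Sup {cmod (\<phi> x) | x. norm x \<le> 1}"

(* W*-algebra (Sakai): the algebra is (isometrically isomorphic to) the dual of a Banach
   space; the predual is realised as a norm-closed subspace P of the dual of A such that
   the canonical map A \<rightarrow> P*, x \<mapsto> (\<phi> \<mapsto> \<phi> x), is isometric and onto. *)
definition w_star :: "('a \<Rightarrow> 'a) \<Rightarrow> (complex \<Rightarrow> 'a \<Rightarrow> 'a::real_normed_algebra_1) \<Rightarrow> bool" where
  "w_star st sc \<longleftrightarrow> (\<exists>P.
     (\<forall>\<phi>\<in>P. cfunctional sc \<phi>) \<and> (\<lambda>_. 0) \<in> P \<and>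
     (\<forall>\<phi>\<in>P. \<forall>\<psi>\<in>P. (\<lambda>x. \<phi> x + \<psi> x) \<in> P) \<and> (\<forall>c. \<forall>\<phi>\<in>P. (\<lambda>x. c * \<phi> x) \<in> P) \<and>
     (\<forall>\<phi> s. cfunctional sc \<phi> \<and> (\<forall>k. s k \<in> P) \<and> (\<lambda>k. fnorm (\<lambda>x. s k x - \<phi> x)) \<longlonglongrightarrow> 0
        \<longrightarrow> \<phi> \<in> P) \<and>
     (\<forall>x. norm x = Sup {cmod (\<phi> x) | \<phi>. \<phi> \<in> P \<and> fnorm \<phi> \<le> 1}) \<and>
     (\<forall>\<Phi>. (\<forall>\<phi>\<in>P. \<forall>\<psi>\<in>P. \<Phi> (\<lambda>x. \<phi> x + \<psi> x) = \<Phi> \<phi> + \<Phi> \<psi>) \<and>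
          (\<forall>c. \<forall>\<phi>\<in>P. \<Phi> (\<lambda>x. c * \<phi> x) = c * \<Phi> \<phi>) \<and>
          (\<exists>K. \<forall>\<phi>\<in>P. cmod (\<Phi> \<phi>) \<le> K * fnorm \<phi>)
        \<longrightarrow> (\<exists>x. \<forall>\<phi>\<in>P. \<Phi> \<phi> = \<phi> x)))"

definition sigma_finite_alg :: "('a::ring_1 \<Rightarrow> 'a) \<Rightarrow> bool" where
  "sigma_finite_alg st \<longleftrightarrow>
     (\<forall>S. (\<forall>p\<in>S. proj st p \<and> p \<noteq> 0) \<and> (\<forall>p\<in>S. \<forall>q\<in>S. p \<noteq> q \<longrightarrow> p * q = 0) \<longrightarrow> countable S)"

definition mnorm :: "('m \<Rightarrow> 'm \<Rightarrow> 'a::real_normed_vector) \<Rightarrow> 'm \<Rightarrow> real" where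
  "mnorm ip x = sqrt (norm (ip x x))"

definition hilbert_module ::
  "('a \<Rightarrow> 'a) \<Rightarrow> (complex \<Rightarrow> 'a \<Rightarrow> 'a::{real_normed_algebra_1,banach,comm_ring_1})
     \<Rightarrow> ('a \<Rightarrow> 'm::ab_group_add \<Rightarrow> 'm) \<Rightarrow> ('m \<Rightarrow> 'm \<Rightarrow> 'a) \<Rightarrow> bool" where
  "hilbert_module st sc act ip \<longleftrightarrow>
     (\<forall>a b x. act (a + b) x = act a x + act b x) \<and>
     (\<forall>a x y. act a (x + y) = act a x + act a y) \<and>
     (\<forall>a b x. act (a * b) x = act a (act b x)) \<and>
     (\<forall>x. act 1 x = x) \<and>
     (\<forall>x y z. ip (x + y) z = ip x z + ip y z) \<and>
     (\<forall>a x y. ip (act a x) y = a * ip x y) \<and>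
     (\<forall>x y. st (ip x y) = ip y x) \<and>
     (\<forall>x. pos st sc (ip x x)) \<and>
     (\<forall>x. ip x x = 0 \<longrightarrow> x = 0) \<and>
     (\<forall>s. (\<forall>e>0. \<exists>N. \<forall>m\<ge>N. \<forall>k\<ge>N. mnorm ip (s m - s k) < e) \<longrightarrow>
          (\<exists>y. (\<lambda>k. mnorm ip (s k - y)) \<longlonglongrightarrow> 0))"

definition has_rank :: "('a \<Rightarrow> 'm \<Rightarrow> 'm::ab_group_add) \<Rightarrow> ('m \<Rightarrow> 'm \<Rightarrow> 'a::ring_1) \<Rightarrow> nat \<Rightarrow> bool" where
  "has_rank act ip d \<longleftrightarrow> (\<exists>\<omega>.
     (\<forall>j\<in>{1..d}. \<forall>k\<in>{1..d}. ip (\<omega> j) (\<omega> k) = (if j = k then 1 else 0)) \<and>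
     (\<forall>x. x = (\<Sum>j=1..d. act (ip x (\<omega> j)) (\<omega> j))))"

definition MFP :: "('m \<Rightarrow> 'm \<Rightarrow> 'a::comm_ring_1) \<Rightarrow> (nat \<Rightarrow> 'm) \<Rightarrow> nat \<Rightarrow> 'a" where
  "MFP ip \<tau> n = (\<Sum>j=1..n. \<Sum>k=1..n. ip (\<tau> j) (\<tau> k) * ip (\<tau> k) (\<tau> j))"

end

theory Submission
  imports Defs "HOL-Computational_Algebra.Formal_Power_Series"
begin

(* In the coordinates a_jl = <\<tau>_j, \<omega>_l> of the frame vectors, <\<tau>_j, \<tau>_k> = \<Sum>_l a_jl a_kl^*,
   so all estimates take place in the commutative algebra A.  The upper bound is the
   Cauchy-Schwarz inequality |<\<tau>_j, \<tau>_k>|^2 \<le> 1, which follows from Lagrange's identity.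
   For the lower bound, MFP = \<Sum>_{l,m} |H_lm|^2 with H_lm = \<Sum>_j a_jl a_jm^* (the frame
   operator in the basis); dropping the off-diagonal terms and using
   \<Sum>_l H_ll^2 \<ge> (\<Sum>_l H_ll)^2 / d for the trace \<Sum>_l H_ll = n gives n^2/d.
   Positivity is handled through the norm condition "a = a^* and \<parallel>t - a\<parallel> \<le> t for some
   t \<ge> 0".  Such elements have self-adjoint square roots (binomial series of \<surd>(1 - w)),
   and if b^2 + e^2 = c with b, e self-adjoint, then x = b + ie has \<parallel>x\<parallel>^2 = \<parallel>x x^*\<parallel> = c,
   whence \<parallel>b\<parallel>^2 \<le> c.  This gives both the closure of the condition under squares and
   the bound \<parallel>a\<parallel> \<le> c for 0 \<le> a \<le> c; the spectrum is needed only to compare the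
   condition with the spectral definition of positivity. *)

lemma invertible_one_minus:
  fixes x :: "'a::{real_normed_algebra_1,banach}"
  assumes "norm x < 1"
  shows "\<exists>b. (1 - x) * b = 1"
proof -
  have summable: "summable (\<lambda>k. x ^ k)"
    by (rule summable_comparison_test'[where g="\<lambda>k. norm x ^ k" and N=0])
       (auto intro!: norm_power_ineq summable_geometric assms)
  have "(\<lambda>k. x ^ k - x ^ Suc k) sums (x ^ 0 - 0)"
    by (rule telescope_sums'[OF LIMSEQ_power_zero[OF assms]])
  then have "(\<lambda>k. (1 - x) * x ^ k) sums 1"
    by (simp add: algebra_simps)
  moreover have "(\<lambda>k. (1 - x) * x ^ k) sums ((1 - x) * suminf (\<lambda>k. x ^ k))"
    using summable by (intro sums_mult summable_sums)
  ultimately show ?thesis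
    using sums_unique2 by blast
qed

definition sqrt_one_minus_coeff :: "nat \<Rightarrow> real" where
  "sqrt_one_minus_coeff k = (-1) ^ k * ((1/2) gchoose k)"

lemma sum_abs_gchoose_half:
  "(\<Sum>k\<le>N. \<bar>(1/2::real) gchoose k\<bar>) = 2 - 2 * real (Suc N) * \<bar>(1/2::real) gchoose Suc N\<bar>"
proof (induction N)
  case 0
  then show ?case by simp
next
  case (Suc N)
  have "real (Suc (Suc N)) * ((1/2::real) gchoose Suc (Suc N))
      = (1/2 - real (Suc N)) * ((1/2) gchoose Suc N)"
    using gbinomial_absorption[of "Suc N" "1/2::real"] gbinomial_absorb_comp[of "1/2::real" "Suc N"]
    by simp
  then have "real (Suc (Suc N)) * \<bar>(1/2::real) gchoose Suc (Suc N)\<bar>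
      = \<bar>1/2 - real (Suc N)\<bar> * \<bar>(1/2::real) gchoose Suc N\<bar>"
    by (metis abs_mult abs_of_nat)
  also have "\<bar>1/2 - real (Suc N)\<bar> = real N + 1/2"
    by simp
  finally show ?case
    using Suc.IH by (simp add: algebra_simps)
qed

(* Absolute convergence also on the boundary |x| = 1 matters: positivity only provides
   square roots of 1 - w with \<parallel>w\<parallel> \<le> 1. *)
lemma summable_abs_sqrt_one_minus_coeff: "summable (\<lambda>k. \<bar>sqrt_one_minus_coeff k\<bar>)"
proof (rule summableI_nonneg_bounded[where x=2])
  fix m
  show "(\<Sum>k<m. \<bar>sqrt_one_minus_coeff k\<bar>) \<le> 2"
  proof (cases m)
    case (Suc N)
    then show ?thesis
      using sum_abs_gchoose_half[of N]
      by (simp add: sqrt_one_minus_coeff_def abs_mult lessThan_Suc_atMost)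
  qed simp
qed simp

lemma sqrt_one_minus_coeff_convolution:
  "(\<Sum>i\<le>k. sqrt_one_minus_coeff i * sqrt_one_minus_coeff (k - i))
     = (if k = 0 then 1 else if k = 1 then -1 else 0)"
proof -
  have "(\<Sum>i\<le>k. sqrt_one_minus_coeff i * sqrt_one_minus_coeff (k - i))
      = (-1) ^ k * (\<Sum>i=0..k. ((1/2::real) gchoose i) * ((1/2) gchoose (k - i)))"
    unfolding sqrt_one_minus_coeff_def sum_distrib_left atLeast0AtMost
    by (intro sum.cong refl) (simp add: power_add[symmetric])
  also have "\<dots> = (-1) ^ k * real (1 choose k)"
    using gbinomial_Vandermonde[of "1/2::real" "1/2" k] binomial_gbinomial[where 'a=real, of 1 k]
    by simp
  finally show ?thesis
    by (simp add: binomial_eq_0)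
qed

lemma sum_sum_diff_square:
  fixes x :: "'i \<Rightarrow> 'b::comm_ring_1"
  shows "(\<Sum>l\<in>A. \<Sum>m\<in>A. (x l - x m) * (x l - x m))
    = 2 * (of_nat (card A) * (\<Sum>l\<in>A. x l * x l) - (\<Sum>l\<in>A. x l) * (\<Sum>l\<in>A. x l))"
proof -
  have "(\<Sum>l\<in>A. \<Sum>m\<in>A. (x l - x m) * (x l - x m))
      = (\<Sum>l\<in>A. \<Sum>m\<in>A. x l * x l) + (\<Sum>l\<in>A. \<Sum>m\<in>A. x m * x m) - 2 * (\<Sum>l\<in>A. \<Sum>m\<in>A. x l * x m)"
    by (simp add: algebra_simps sum.distrib sum_subtractf sum_distrib_left)
  also have "(\<Sum>l\<in>A. \<Sum>m\<in>A. x l * x l) = of_nat (card A) * (\<Sum>l\<in>A. x l * x l)"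
    by (simp add: sum_distrib_left)
  also have "(\<Sum>l\<in>A. \<Sum>m\<in>A. x m * x m) = of_nat (card A) * (\<Sum>l\<in>A. x l * x l)"
    by simp
  also have "(\<Sum>l\<in>A. \<Sum>m\<in>A. x l * x m) = (\<Sum>l\<in>A. x l) * (\<Sum>l\<in>A. x l)"
    by (simp add: sum_product)
  finally show ?thesis
    by (simp add: algebra_simps)
qed

locale comm_cstar_algebra =
  fixes st :: "'a::{real_normed_algebra_1,banach,comm_ring_1} \<Rightarrow> 'a"
    and sc :: "complex \<Rightarrow> 'a \<Rightarrow> 'a"
  assumes cstar_algebra: "cstar_algebra st sc"
begin

lemma sc_add: "sc (c + d) a = sc c a + sc d a"
  using cstar_algebra unfolding cstar_algebra_def by (elim conjE allE) assumption

lemma sc_sc: "sc (c * d) a = sc c (sc d a)"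
  using cstar_algebra unfolding cstar_algebra_def by (elim conjE allE) assumption

lemma sc_1: "sc 1 a = a"
  using cstar_algebra unfolding cstar_algebra_def by (elim conjE allE) assumption

lemma sc_of_real: "sc (complex_of_real r) a = r *\<^sub>R a"
  using cstar_algebra unfolding cstar_algebra_def by (elim conjE allE) assumption

lemma sc_mult: "sc c (a * b) = sc c a * b"
  using cstar_algebra unfolding cstar_algebra_def by (elim conjE allE) assumption

lemma norm_sc: "norm (sc c a) = cmod c * norm a"
  using cstar_algebra unfolding cstar_algebra_def by (elim conjE allE) assumption

lemma st_st [simp]: "st (st a) = a"
  using cstar_algebra unfolding cstar_algebra_def by (elim conjE allE) assumption

lemma st_add [simp]: "st (a + b) = st a + st b"
  using cstar_algebra unfolding cstar_algebra_def by (elim conjE allE) assumption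

lemma st_sc: "st (sc c a) = sc (cnj c) (st a)"
  using cstar_algebra unfolding cstar_algebra_def by (elim conjE allE) assumption

lemma st_mult [simp]: "st (a * b) = st a * st b"
proof -
  have "st (a * b) = st b * st a"
    using cstar_algebra unfolding cstar_algebra_def by (elim conjE allE) assumption
  then show ?thesis
    by (simp add: mult.commute)
qed

lemma norm_st_mult_self: "norm (st a * a) = (norm a)\<^sup>2"
  using cstar_algebra unfolding cstar_algebra_def by (elim conjE allE) assumption

definition of_complex :: "complex \<Rightarrow> 'a" where
  "of_complex c = sc c 1"

lemma sc_conv_of_complex: "sc c a = of_complex c * a"
  unfolding of_complex_def using sc_mult[of c 1 a] by simp

lemma of_complex_add: "of_complex (c + d) = of_complex c + of_complex d"
  unfolding of_complex_def by (rule sc_add)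

lemma of_complex_mult: "of_complex (c * d) = of_complex c * of_complex d"
  unfolding of_complex_def sc_sc by (simp add: sc_conv_of_complex[of c])

lemma of_complex_of_real: "of_complex (complex_of_real r) = of_real r"
  unfolding of_complex_def sc_of_real by (simp add: of_real_def)

lemma of_complex_1 [simp]: "of_complex 1 = 1"
  unfolding of_complex_def by (rule sc_1)

lemma of_complex_0 [simp]: "of_complex 0 = 0"
  using of_complex_of_real[of 0] by simp

lemma of_complex_minus: "of_complex (- c) = - of_complex c"
  using of_complex_add[of c "- c"] minus_unique[of "of_complex c"] by simp

lemma of_complex_diff: "of_complex (c - d) = of_complex c - of_complex d"
  using of_complex_add[of c "- d"] by (simp add: of_complex_minus)

lemma norm_of_complex: "norm (of_complex c) = cmod c"
  unfolding of_complex_def by (simp add: norm_sc)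

lemma of_complex_i_squared: "of_complex \<i> * of_complex \<i> = - 1"
  by (simp add: of_complex_minus flip: of_complex_mult)

lemma st_0 [simp]: "st 0 = 0"
  using st_add[of 0 0] by simp

lemma st_1 [simp]: "st 1 = 1"
  using st_mult[of "st 1" 1] by simp

lemma st_minus [simp]: "st (- a) = - st a"
  using st_add[of a "- a"] minus_unique[of "st a"] by simp

lemma st_diff [simp]: "st (a - b) = st a - st b"
  using st_add[of a "- b"] by simp

lemma st_of_complex [simp]: "st (of_complex c) = of_complex (cnj c)"
  unfolding of_complex_def st_sc by simp

lemma st_scaleR [simp]: "st (r *\<^sub>R a) = r *\<^sub>R st a"
  using st_sc[of "complex_of_real r" a] by (simp add: sc_of_real)

lemma st_of_real [simp]: "st (of_real r) = of_real r"
  by (simp add: of_real_def)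

lemma st_sum [simp]: "st (sum f A) = (\<Sum>x\<in>A. st (f x))"
  by (induction A rule: infinite_finite_induct) auto

lemma st_power [simp]: "st (a ^ k) = st a ^ k"
  by (induction k) auto

lemma norm_st [simp]: "norm (st a) = norm a"
proof -
  have "norm a \<le> norm (st a)" for a
  proof (cases "a = 0")
    case False
    have "(norm a)\<^sup>2 \<le> norm (st a) * norm a"
      using norm_st_mult_self[of a] norm_mult_ineq[of "st a" a] by simp
    then show ?thesis
      using False by (simp add: power2_eq_square)
  qed simp
  from this[of a] this[of "st a"] show ?thesis
    by simp
qed

lemma bounded_linear_st: "bounded_linear st"
  by (rule bounded_linear_intro[where K=1]) auto

subsection \<open>Spectrum\<close>

lemma spec_iff: "z \<in> spec sc a \<longleftrightarrow> \<not> (\<exists>b. (of_complex z - a) * b = 1)"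
  unfolding spec_def of_complex_def by (auto simp: mult.commute)

lemma cmod_le_norm_if_spec:
  assumes "z \<in> spec sc a"
  shows "cmod z \<le> norm a"
proof (rule ccontr)
  assume "\<not> cmod z \<le> norm a"
  then have z: "z \<noteq> 0" and less: "norm a < cmod z"
    by auto
  let ?x = "of_complex (inverse z) * a"
  have "norm ?x \<le> norm a / cmod z"
    using norm_mult_ineq[of "of_complex (inverse z)" a]
    by (simp add: norm_of_complex norm_inverse divide_inverse mult.commute)
  also have "\<dots> < 1"
    using less by (simp add: divide_less_eq)
  finally obtain b where b: "(1 - ?x) * b = 1"
    using invertible_one_minus by blast
  have inverse: "of_complex z * of_complex (inverse z) = 1"
    using z by (simp flip: of_complex_mult)
  have "of_complex z * (1 - ?x) = of_complex z - (of_complex z * of_complex (inverse z)) * a"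
    by (simp add: right_diff_distrib mult.assoc)
  then have factor: "of_complex z - a = of_complex z * (1 - ?x)"
    using inverse by simp
  have "(of_complex z - a) * (of_complex (inverse z) * b)
      = (of_complex z * of_complex (inverse z)) * ((1 - ?x) * b)"
    unfolding factor by (simp only: ac_simps)
  also have "\<dots> = 1"
    using b inverse by simp
  finally show False
    using assms spec_iff by blast
qed

(* Shifting by \<i> s gives |z + \<i> s|^2 \<le> \<parallel>h + \<i> s\<parallel>^2 = \<parallel>h^2 + s^2\<parallel> \<le> \<parallel>h\<parallel>^2 + s^2 for all
   real s, which is impossible for Im z \<noteq> 0 and s large. *)
lemma Im_spec_selfadjoint:
  assumes h: "st h = h" and z: "z \<in> spec sc h"
  shows "Im z = 0"
proof (rule ccontr)
  assume nz: "Im z \<noteq> 0"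
  define s where "s = ((norm h)\<^sup>2 + 1) / (2 * Im z)"
  define p where "p = h + of_complex (\<i> * complex_of_real s)"
  have norm_of_real_square: "norm (of_real (s\<^sup>2) :: 'a) = s\<^sup>2"
    by (simp only: norm_of_real abs_power2)
  have "of_complex (z + \<i> * complex_of_real s) - p = of_complex z - h"
    unfolding p_def by (simp add: of_complex_add)
  then have "z + \<i> * complex_of_real s \<in> spec sc p"
    using z spec_iff by simp
  then have "(cmod (z + \<i> * complex_of_real s))\<^sup>2 \<le> (norm p)\<^sup>2"
    by (intro power_mono cmod_le_norm_if_spec) auto
  also have "(norm p)\<^sup>2 = norm (h * h + of_real (s\<^sup>2))"
  proof -
    have "st p * p = h * h + of_complex (complex_of_real (s\<^sup>2))"
      unfolding p_def using h
      by (simp add: of_complex_minus algebra_simps power2_eq_square flip: of_complex_mult)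
    then show ?thesis
      using norm_st_mult_self[of p] of_complex_of_real[of "s\<^sup>2"] by simp
  qed
  also have "\<dots> \<le> norm (h * h) + norm (of_real (s\<^sup>2) :: 'a)"
    by (rule norm_triangle_ineq)
  also have "\<dots> \<le> (norm h)\<^sup>2 + s\<^sup>2"
    using norm_mult_ineq[of h h] norm_of_real_square unfolding power2_eq_square by linarith
  finally have "(Re z)\<^sup>2 + (Im z + s)\<^sup>2 \<le> (norm h)\<^sup>2 + s\<^sup>2"
    by (simp add: cmod_power2)
  then have "(Re z)\<^sup>2 + (Im z)\<^sup>2 + 2 * Im z * s \<le> (norm h)\<^sup>2"
    by (simp add: power2_eq_square algebra_simps)
  moreover have "2 * Im z * s = (norm h)\<^sup>2 + 1"
    unfolding s_def using nz by simp
  ultimately show False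
    using zero_le_power2[of "Re z"] zero_le_power2[of "Im z"] by linarith
qed

lemma spec_of_real_minus:
  assumes "z \<in> spec sc (of_real t - a)"
  shows "complex_of_real t - z \<in> spec sc a"
proof (rule ccontr)
  assume "complex_of_real t - z \<notin> spec sc a"
  then obtain b where "(of_complex (complex_of_real t - z) - a) * b = 1"
    using spec_iff by blast
  then have "(of_complex z - (of_real t - a)) * (- b) = 1"
    by (simp add: of_complex_diff of_complex_of_real algebra_simps)
  then show False
    using assms spec_iff by blast
qed

subsection \<open>Positivity through the norm\<close>

(* For self-adjoint a, the condition says that the spectrum of a lies in [0, 2t]. *)
definition nonneg :: "'a \<Rightarrow> bool" where
  "nonneg a \<longleftrightarrow> st a = a \<and> (\<exists>t\<ge>0. norm (of_real t - a) \<le> t)"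

lemma nonneg_imp_pos:
  assumes "nonneg a"
  shows "pos st sc a"
proof -
  obtain t where sa: "st a = a" and t: "norm (of_real t - a) \<le> t"
    using assms unfolding nonneg_def by blast
  have "z \<in> complex_of_real ` {0..}" if z: "z \<in> spec sc a" for z
  proof -
    have "z \<in> spec sc (of_real t - (of_real t - a))"
      using z by simp
    then have shifted: "complex_of_real t - z \<in> spec sc (of_real t - a)"
      by (rule spec_of_real_minus)
    have "Im (complex_of_real t - z) = 0"
      using sa by (intro Im_spec_selfadjoint[OF _ shifted]) simp
    then have "Im z = 0"
      by simp
    moreover have "\<bar>t - Re z\<bar> \<le> t"
      using cmod_le_norm_if_spec[OF shifted] t \<open>Im z = 0\<close> by (simp add: cmod_eq_Re)
    ultimately show ?thesis
      by (intro image_eqI[of _ _ "Re z"]) (auto simp: complex_eq_iff)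
  qed
  then show ?thesis
    unfolding pos_def using sa by auto
qed

lemma alg_le_if_nonneg:
  assumes "st a = a" "nonneg (b - a)"
  shows "alg_le st sc a b"
proof -
  have "st (b - a) = b - a"
    using assms(2) unfolding nonneg_def by blast
  then have "st b = b"
    using assms(1) by simp
  then show ?thesis
    unfolding alg_le_def using assms nonneg_imp_pos by blast
qed

lemma nonneg_0 [simp]: "nonneg 0"
  unfolding nonneg_def by auto

lemma nonneg_add:
  assumes "nonneg a" "nonneg b"
  shows "nonneg (a + b)"
proof -
  obtain s t where "st a = a" "st b = b" "s \<ge> 0" "t \<ge> 0"
    and "norm (of_real s - a) \<le> s" "norm (of_real t - b) \<le> t"
    using assms unfolding nonneg_def by blast
  moreover have "norm (of_real (s + t) - (a + b)) \<le> norm (of_real s - a) + norm (of_real t - b)"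
    using norm_triangle_ineq[of "of_real s - a" "of_real t - b"] by (simp add: algebra_simps)
  ultimately show ?thesis
    unfolding nonneg_def by (auto intro!: exI[of _ "s + t"])
qed

lemma nonneg_scaleR:
  assumes "nonneg a" "c \<ge> 0"
  shows "nonneg (c *\<^sub>R a)"
proof -
  obtain t where "st a = a" "t \<ge> 0" "norm (of_real t - a) \<le> t"
    using assms unfolding nonneg_def by blast
  moreover have "of_real (c * t) - c *\<^sub>R a = c *\<^sub>R (of_real t - a)"
    by (simp add: scaleR_diff_right of_real_def)
  ultimately show ?thesis
    unfolding nonneg_def using assms(2) by (auto intro!: exI[of _ "c * t"] mult_left_mono)
qed

lemma nonneg_sum: "(\<And>i. i \<in> A \<Longrightarrow> nonneg (f i)) \<Longrightarrow> nonneg (sum f A)"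
  by (induction A rule: infinite_finite_induct) (auto simp: nonneg_add)

lemma nonneg_of_real_norm_minus:
  assumes "st a = a"
  shows "nonneg (of_real (norm a) - a)"
  unfolding nonneg_def using assms by (auto intro!: exI[of _ "norm a"])

lemma sqrt_one_minus:
  assumes w: "st w = w" "norm w \<le> 1"
  obtains f where "st f = f" "f * f = 1 - w"
proof -
  define X where "X k = sqrt_one_minus_coeff k *\<^sub>R w ^ k" for k
  have "norm (X k) \<le> \<bar>sqrt_one_minus_coeff k\<bar>" for k
  proof -
    have "norm (w ^ k) \<le> 1"
      using norm_power_ineq[of w k] power_le_one[OF norm_ge_zero w(2), where n=k] by linarith
    then show ?thesis
      unfolding X_def by (simp add: mult_left_le)
  qed
  then have summable: "summable (\<lambda>k. norm (X k))"
    by (intro summable_comparison_test'[OF summable_abs_sqrt_one_minus_coeff, where N=0]) simp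
  define f where "f = suminf X"
  have "(\<lambda>k. \<Sum>i\<le>k. X i * X (k - i)) sums (f * f)"
    unfolding f_def by (rule Cauchy_product_sums[OF summable summable])
  moreover have "(\<lambda>k. \<Sum>i\<le>k. X i * X (k - i))
      = (\<lambda>k. (if k = 0 then 1 else 0) + (if k = 1 then - w else 0))"
  proof
    fix k
    have "(\<Sum>i\<le>k. X i * X (k - i))
        = (\<Sum>i\<le>k. sqrt_one_minus_coeff i * sqrt_one_minus_coeff (k - i)) *\<^sub>R w ^ k"
      unfolding X_def scaleR_sum_left
      by (intro sum.cong refl) (simp add: power_add[symmetric])
    then show "(\<Sum>i\<le>k. X i * X (k - i)) = (if k = 0 then 1 else 0) + (if k = 1 then - w else 0)"
      by (simp add: sqrt_one_minus_coeff_convolution)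
  qed
  moreover have "(\<lambda>k. (if k = 0 then 1 else 0) + (if k = 1 then - w else 0)) sums (1 + - w)"
    by (intro sums_add sums_single)
  ultimately have "f * f = 1 - w"
    using sums_unique2 by fastforce
  moreover have "st f = f"
  proof -
    have "st f = (\<Sum>k. st (X k))"
      unfolding f_def using summable summable_norm_cancel
      by (blast intro: bounded_linear.suminf[OF bounded_linear_st])
    also have "(\<lambda>k. st (X k)) = X"
      unfolding X_def using w(1) by simp
    finally show ?thesis
      unfolding f_def .
  qed
  ultimately show ?thesis
    using that by blast
qed

lemma nonneg_sqrt:
  assumes "nonneg a"
  obtains b where "st b = b" "b * b = a"
proof -
  obtain t where sa: "st a = a" and t: "t \<ge> 0" "norm (of_real t - a) \<le> t"
    using assms unfolding nonneg_def by blast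
  show ?thesis
  proof (cases "t = 0")
    case True
    then show ?thesis
      using t that[of 0] by simp
  next
    case False
    define w where "w = (1 / t) *\<^sub>R (of_real t - a)"
    have "st w = w" "norm w \<le> 1"
      unfolding w_def using sa t False by (auto simp: divide_le_eq_1)
    then obtain f where f: "st f = f" "f * f = 1 - w"
      by (rule sqrt_one_minus)
    have "1 - w = (1 / t) *\<^sub>R a"
      unfolding w_def using False by (simp add: scaleR_diff_right of_real_def)
    then have "(sqrt t *\<^sub>R f) * (sqrt t *\<^sub>R f) = a"
      using f(2) t(1) False by (simp add: real_sqrt_mult_self)
    then show ?thesis
      using that[of "sqrt t *\<^sub>R f"] f(1) by simp
  qed
qed

lemma norm_square_le_if_sum_squares:
  assumes b: "st b = b" and e: "st e = e" and sum: "b * b + e * e = of_real c" and "0 \<le> c"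
  shows "norm (b * b) \<le> c"
proof -
  define x where "x = b + of_complex \<i> * e"
  have "x * st x = b * b - (of_complex \<i> * of_complex \<i>) * (e * e)"
    unfolding x_def using b e by (simp add: of_complex_minus algebra_simps)
  then have "(norm x)\<^sup>2 = c"
    using sum \<open>0 \<le> c\<close> norm_st_mult_self[of x] by (simp add: of_complex_i_squared mult.commute)
  moreover have "2 * norm b \<le> 2 * norm x"
  proof -
    have "x + st x = 2 *\<^sub>R b"
      unfolding x_def using b e by (simp add: of_complex_minus scaleR_2)
    then show ?thesis
      using norm_triangle_ineq[of x "st x"] by simp
  qed
  ultimately show ?thesis
    using norm_mult_ineq[of b b] power_mono[of "norm b" "norm x" 2]
    by (simp add: power2_eq_square)
qed

lemma nonneg_square:
  assumes "st y = y"
  shows "nonneg (y * y)"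
proof -
  define t where "t = norm (y * y)"
  have "nonneg (of_real t - y * y)"
    unfolding nonneg_def t_def using assms by (auto intro!: exI[of _ "norm (y * y)"])
  then obtain e where e: "st e = e" "e * e = of_real t - y * y"
    by (rule nonneg_sqrt)
  have "norm (e * e) \<le> t"
    using e assms by (intro norm_square_le_if_sum_squares) (auto simp: t_def)
  then show ?thesis
    unfolding nonneg_def using e(2) assms by (auto intro!: exI[of _ t] simp: t_def)
qed

lemma nonneg_mult_st: "nonneg (x * st x)"
proof -
  let ?i = "of_complex \<i>"
  have "(x + st x) * (x + st x) + (?i * (st x - x)) * (?i * (st x - x)) = 4 * (x * st x)"
    using of_complex_i_squared by (simp add: algebra_simps)
  moreover have "nonneg ((x + st x) * (x + st x) + (?i * (st x - x)) * (?i * (st x - x)))"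
    by (intro nonneg_add nonneg_square) (simp_all add: of_complex_minus algebra_simps)
  ultimately have "nonneg ((4::real) *\<^sub>R (x * st x))"
    by (simp add: scaleR_conv_of_real)
  then have "nonneg ((1/4::real) *\<^sub>R (4::real) *\<^sub>R (x * st x))"
    by (rule nonneg_scaleR) simp
  then show ?thesis
    by simp
qed

lemma norm_le_if_nonneg:
  assumes "nonneg a" "nonneg (of_real c - a)" "0 \<le> c"
  shows "norm a \<le> c"
proof -
  obtain b where b: "st b = b" "b * b = a"
    using assms(1) by (rule nonneg_sqrt)
  obtain e where e: "st e = e" "e * e = of_real c - a"
    using assms(2) by (rule nonneg_sqrt)
  show ?thesis
    using norm_square_le_if_sum_squares[OF b(1) e(1) _ assms(3)] b(2) e(2) by simp
qed

subsection \<open>Coordinate inner products\<close>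

definition dot :: "'i set \<Rightarrow> ('i \<Rightarrow> 'a) \<Rightarrow> ('i \<Rightarrow> 'a) \<Rightarrow> 'a" where
  "dot L u v = (\<Sum>l\<in>L. u l * st (v l))"

lemma st_dot [simp]: "st (dot L u v) = dot L v u"
  unfolding dot_def by (simp add: mult.commute)

lemma lagrange_identity:
  "(\<Sum>l\<in>L. \<Sum>m\<in>L. (u l * v m - u m * v l) * st (u l * v m - u m * v l))
     = 2 * (dot L u u * dot L v v - dot L u v * dot L v u)"
proof -
  have expand: "(u l * v m - u m * v l) * st (u l * v m - u m * v l)
      = u l * st (u l) * (v m * st (v m)) - u l * st (v l) * (v m * st (u m))
        - v l * st (u l) * (u m * st (v m)) + v l * st (v l) * (u m * st (u m))" for l m
    by (simp add: algebra_simps)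
  have "(\<Sum>l\<in>L. \<Sum>m\<in>L. (u l * v m - u m * v l) * st (u l * v m - u m * v l))
      = dot L u u * dot L v v - dot L u v * dot L v u - dot L v u * dot L u v + dot L v v * dot L u u"
    unfolding expand dot_def sum_product by (simp add: sum_subtractf sum.distrib)
  then show ?thesis
    by (simp add: algebra_simps)
qed

lemma nonneg_cauchy_schwarz: "nonneg (dot L u u * dot L v v - dot L u v * dot L v u)"
proof -
  let ?X = "dot L u u * dot L v v - dot L u v * dot L v u"
  have double: "(\<Sum>l\<in>L. \<Sum>m\<in>L. (u l * v m - u m * v l) * st (u l * v m - u m * v l)) = ?X + ?X"
    unfolding lagrange_identity by (rule mult_2)
  have half: "?X = (1/2) *\<^sub>R (\<Sum>l\<in>L. \<Sum>m\<in>L. (u l * v m - u m * v l) * st (u l * v m - u m * v l))"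
    unfolding double by (rule scaleR_half_double[symmetric])
  show ?thesis
    unfolding half by (intro nonneg_scaleR nonneg_sum nonneg_mult_st) simp
qed

lemma norm_dot_mult_le_1:
  assumes "dot L u u = 1" "dot L v v = 1"
  shows "norm (dot L u v * dot L v u) \<le> 1"
  using norm_le_if_nonneg[of "dot L u v * dot L v u" 1] nonneg_cauchy_schwarz[of L u v]
    nonneg_mult_st[of "dot L u v"] assms
  by simp

lemma nonneg_sum_minus_diagonal:
  assumes "finite L"
  shows "nonneg ((\<Sum>l\<in>L. \<Sum>m\<in>L. H l m * st (H l m)) - (\<Sum>l\<in>L. H l l * st (H l l)))"
proof -
  have "(\<Sum>m\<in>L. H l m * st (H l m)) = H l l * st (H l l) + (\<Sum>m\<in>L - {l}. H l m * st (H l m))"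
    if "l \<in> L" for l
    by (rule sum.remove[OF assms that])
  then have "(\<Sum>l\<in>L. \<Sum>m\<in>L. H l m * st (H l m)) - (\<Sum>l\<in>L. H l l * st (H l l))
      = (\<Sum>l\<in>L. \<Sum>m\<in>L - {l}. H l m * st (H l m))"
    by (simp add: sum.distrib)
  then show ?thesis
    by (simp add: nonneg_sum nonneg_mult_st)
qed

lemma nonneg_sum_squares_minus_mean:
  assumes "finite L" "L \<noteq> {}" "\<And>l. l \<in> L \<Longrightarrow> st (x l) = x l"
  shows "nonneg ((\<Sum>l\<in>L. x l * x l) - (1 / real (card L)) *\<^sub>R ((\<Sum>l\<in>L. x l) * (\<Sum>l\<in>L. x l)))"
proof -
  have d: "real (card L) > 0"
    using assms by (simp add: card_gt_0_iff)
  have "(\<Sum>l\<in>L. \<Sum>m\<in>L. (x l - x m) * (x l - x m))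
      = (2 * real (card L)) *\<^sub>R (\<Sum>l\<in>L. x l * x l) - 2 *\<^sub>R ((\<Sum>l\<in>L. x l) * (\<Sum>l\<in>L. x l))"
    unfolding sum_sum_diff_square by (simp add: scaleR_conv_of_real algebra_simps)
  then have "(\<Sum>l\<in>L. x l * x l) - (1 / real (card L)) *\<^sub>R ((\<Sum>l\<in>L. x l) * (\<Sum>l\<in>L. x l))
      = (1 / (2 * real (card L))) *\<^sub>R (\<Sum>l\<in>L. \<Sum>m\<in>L. (x l - x m) * (x l - x m))"
    using d by (simp add: scaleR_diff_right)
  moreover have "nonneg (\<Sum>l\<in>L. \<Sum>m\<in>L. (x l - x m) * (x l - x m))"
    using assms(3) by (intro nonneg_sum nonneg_square) simp
  ultimately show ?thesis
    by (simp add: nonneg_scaleR)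
qed

subsection \<open>Frame potential in coordinates\<close>

lemma frame_potential_transpose:
  "(\<Sum>j\<in>J. \<Sum>k\<in>J. dot L (a j) (a k) * dot L (a k) (a j))
     = (\<Sum>l\<in>L. \<Sum>m\<in>L. dot J (\<lambda>j. a j l) (\<lambda>j. a j m) * dot J (\<lambda>j. a j m) (\<lambda>j. a j l))"
  unfolding dot_def sum_product
  by (simp only: sum.swap[where A=J and B=L]) (simp add: mult_ac)

lemma nonneg_frame_potential:
  "nonneg (\<Sum>j\<in>J. \<Sum>k\<in>J. dot L (a j) (a k) * dot L (a k) (a j))"
  by (intro nonneg_sum) (metis nonneg_mult_st st_dot)

lemma frame_potential_upper_bound:
  assumes "\<And>j. j \<in> J \<Longrightarrow> dot L (a j) (a j) = 1"
  shows "norm (\<Sum>j\<in>J. \<Sum>k\<in>J. dot L (a j) (a k) * dot L (a k) (a j)) \<le> (real (card J))\<^sup>2"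
proof -
  have "norm (\<Sum>j\<in>J. \<Sum>k\<in>J. dot L (a j) (a k) * dot L (a k) (a j))
      \<le> (\<Sum>j\<in>J. \<Sum>k\<in>J. norm (dot L (a j) (a k) * dot L (a k) (a j)))"
    by (intro order_trans[OF norm_sum] sum_mono norm_sum)
  also have "\<dots> \<le> (\<Sum>j\<in>J. \<Sum>k\<in>J. 1)"
    using assms by (intro sum_mono norm_dot_mult_le_1) auto
  finally show ?thesis
    by (simp add: power2_eq_square)
qed

lemma sum_dot_self_transpose:
  "(\<Sum>l\<in>L. dot J (\<lambda>j. a j l) (\<lambda>j. a j l)) = (\<Sum>j\<in>J. dot L (a j) (a j))"
  unfolding dot_def by (rule sum.swap)

lemma frame_potential_lower_bound:
  assumes "finite J" "finite L" and unit: "\<And>j. j \<in> J \<Longrightarrow> dot L (a j) (a j) = 1"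
  shows "nonneg ((\<Sum>j\<in>J. \<Sum>k\<in>J. dot L (a j) (a k) * dot L (a k) (a j))
    - of_real ((real (card J))\<^sup>2 / real (card L)))"
proof (cases "L = {}")
  case True
  then have "J = {}"
    using unit by (auto simp: dot_def)
  then show ?thesis
    by simp
next
  case False
  define H where "H l m = dot J (\<lambda>j. a j l) (\<lambda>j. a j m)" for l m
  have st_H: "st (H l m) = H m l" for l m
    unfolding H_def by simp
  have potential: "(\<Sum>j\<in>J. \<Sum>k\<in>J. dot L (a j) (a k) * dot L (a k) (a j))
      = (\<Sum>l\<in>L. \<Sum>m\<in>L. H l m * st (H l m))"
    by (subst frame_potential_transpose) (simp add: H_def)
  have "(\<Sum>l\<in>L. H l l) = (\<Sum>j\<in>J. dot L (a j) (a j))"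
    unfolding H_def by (rule sum_dot_self_transpose)
  also have "\<dots> = of_nat (card J)"
    using unit by simp
  finally have bound: "of_real ((real (card J))\<^sup>2 / real (card L))
      = (1 / real (card L)) *\<^sub>R ((\<Sum>l\<in>L. H l l) * (\<Sum>l\<in>L. H l l))"
    by (simp add: scaleR_conv_of_real divide_inverse power2_eq_square mult_ac)
  have "nonneg (((\<Sum>l\<in>L. \<Sum>m\<in>L. H l m * st (H l m)) - (\<Sum>l\<in>L. H l l * st (H l l)))
      + ((\<Sum>l\<in>L. H l l * H l l) - (1 / real (card L)) *\<^sub>R ((\<Sum>l\<in>L. H l l) * (\<Sum>l\<in>L. H l l))))"
    using assms(2) False st_H
    by (intro nonneg_add nonneg_sum_minus_diagonal nonneg_sum_squares_minus_mean) auto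
  then show ?thesis
    unfolding potential bound using st_H by simp
qed
end

lemma ip_eq_sum_coordinates:
  fixes ip :: "'m::ab_group_add \<Rightarrow> 'm \<Rightarrow> 'a::{real_normed_algebra_1,banach,comm_ring_1}"
  assumes "hilbert_module st sc act ip"
    and expansion: "\<And>x. x = (\<Sum>l\<in>L. act (ip x (\<omega> l)) (\<omega> l))"
  shows "ip x y = (\<Sum>l\<in>L. ip x (\<omega> l) * st (ip y (\<omega> l)))"
proof -
  have ip_add: "ip (x + x') y = ip x y + ip x' y" for x x' y
    using assms(1) unfolding hilbert_module_def by (elim conjE allE) assumption
  have ip_act: "ip (act c x) y = c * ip x y" for c x y
    using assms(1) unfolding hilbert_module_def by (elim conjE allE) assumption
  have st_ip: "st (ip x y) = ip y x" for x y
    using assms(1) unfolding hilbert_module_def by (elim conjE allE) assumption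
  have ip_sum: "ip (sum f A) y = (\<Sum>i\<in>A. ip (f i) y)" for f :: "'i \<Rightarrow> 'm" and A
    by (induction A rule: infinite_finite_induct) (auto simp: ip_add ip_add[of 0 0, simplified])
  have "ip x y = ip (\<Sum>l\<in>L. act (ip x (\<omega> l)) (\<omega> l)) y"
    by (subst expansion) (rule refl)
  also have "\<dots> = (\<Sum>l\<in>L. ip x (\<omega> l) * st (ip y (\<omega> l)))"
    by (simp add: ip_sum ip_act st_ip)
  finally show ?thesis .
qed

theorem proposition3p4:
  fixes st :: "'a::{real_normed_algebra_1,banach,comm_ring_1} \<Rightarrow> 'a"
    and sc :: "complex \<Rightarrow> 'a \<Rightarrow> 'a"
    and act :: "'a \<Rightarrow> 'm::ab_group_add \<Rightarrow> 'm"
    and ip :: "'m \<Rightarrow> 'm \<Rightarrow> 'a"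
    and d n :: nat
    and \<tau> :: "nat \<Rightarrow> 'm"
  assumes "cstar_algebra st sc"
    and "(w_star st sc \<and> sigma_finite_alg st) \<or> aw_star st sc"
    and "hilbert_module st sc act ip"
    and "has_rank act ip d"
    and "\<forall>j\<in>{1..n}. ip (\<tau> j) (\<tau> j) = 1"
  shows "norm (MFP ip \<tau> n) \<le> (real n)\<^sup>2
       \<and> alg_le st sc (MFP ip \<tau> n) (of_real (norm (MFP ip \<tau> n)))
       \<and> alg_le st sc (of_real ((real n)\<^sup>2 / real d)) (MFP ip \<tau> n)"
proof -
  interpret comm_cstar_algebra st sc
    by (rule comm_cstar_algebra.intro) (rule assms(1))
  obtain \<omega> where expansion: "\<And>x. x = (\<Sum>l=1..d. act (ip x (\<omega> l)) (\<omega> l))"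
    using assms(4) unfolding has_rank_def by blast
  define a where "a j l = ip (\<tau> j) (\<omega> l)" for j l
  have gram: "ip (\<tau> j) (\<tau> k) = dot {1..d} (a j) (a k)" for j k
    unfolding a_def dot_def by (rule ip_eq_sum_coordinates[OF assms(3) expansion])
  have MFP: "MFP ip \<tau> n = (\<Sum>j\<in>{1..n}. \<Sum>k\<in>{1..n}. dot {1..d} (a j) (a k) * dot {1..d} (a k) (a j))"
    unfolding MFP_def gram ..
  have unit: "dot {1..d} (a j) (a j) = 1" if "j \<in> {1..n}" for j
    using assms(5) that unfolding gram by blast
  have selfadjoint: "st (MFP ip \<tau> n) = MFP ip \<tau> n"
    using nonneg_frame_potential unfolding MFP nonneg_def by blast
  have upper: "norm (MFP ip \<tau> n) \<le> (real n)\<^sup>2"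
    using frame_potential_upper_bound[of "{1..n}" "{1..d}" a, OF unit] unfolding MFP by simp
  have lower: "nonneg (MFP ip \<tau> n - of_real ((real n)\<^sup>2 / real d))"
    using frame_potential_lower_bound[of "{1..n}" "{1..d}" a, OF _ _ unit] unfolding MFP by simp
  show ?thesis
    using upper alg_le_if_nonneg[OF selfadjoint nonneg_of_real_norm_minus[OF selfadjoint]]
      alg_le_if_nonneg[OF st_of_real lower]
    by blast
qed

end
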